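(* If $S,T\in \mathcal{B}_{A}(\mathcal{H})$, then $$d\omega _{A_{0}}\left( \begin{bmatrix} S & T \\ T & S \end{bmatrix} \right) =d\omega _{A_{0}}\left( \begin{bmatrix} S-T & 0 \\ 0 & S+T \end{bmatrix} \right).$$ In particular, $$d\omega _{A_{0}}\left( \begin{bmatrix} 0 & S \\ S & 0 \end{bmatrix} \right) =d\omega _{A}\left( S\right).$$
   Context: $\mathcal{H}$ is a complex Hilbert space and $A\in\mathcal{B}(\mathcal{H})$ is a positive operator; $\langle x,z\rangle_A=\langle Ax,z\rangle$ and $\|z\|_A=\|A^{1/2}z\|$. $\mathcal{B}_A(\mathcal{H})$ denotes the set of bounded operators $S$ on $\mathcal{H}$ admitting an $A$-adjoint, i.e. with $\mathcal{R}(S^*A)\subseteq\mathcal{R}(A)$. The $A$-Davis-Wielandt radius is $d\omega_A(S)=\sup\{(|\langle Sz,z\rangle_A|^2+\|Sz\|_A^4)^{1/2}: z\in\mathcal{H},\ \|z\|_A=1\}$. $A_0=\begin{bmatrix} A&0\\0&A\end{bmatrix}$ is the positive operator on $\mathcal{H}\oplus\mathcal{H}$, inducing $\langle x,z\rangle_{A_0}=\langle x_1,z_1\rangle_A+\langle x_2,z_2\rangle_A$ for $x=(x_1,x_2)$, $z=(z_1,z_2)$, and $d\omega_{A_0}$ is the corresponding $A_0$-Davis-Wielandt radius on $\mathcal{H}\oplus\mathcal{H}$. *)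

theory Defs
  imports "HOL-Analysis.Analysis"
begin

text \<open>Complex Hilbert spaces (not available in the distribution library):
  a real Banach space with a compatible complex scalar multiplication and a
  complex inner product (linear in the first argument) inducing the norm.\<close>

class chilbert_space = real_normed_vector + complete_space +
  fixes scaleC :: "complex \<Rightarrow> 'a \<Rightarrow> 'a" (infixr "*\<^sub>C" 75)
    and cinner :: "'a \<Rightarrow> 'a \<Rightarrow> complex"
  assumes scaleC_add_right: "c *\<^sub>C (x + y) = c *\<^sub>C x + c *\<^sub>C y"
    and scaleC_add_left: "(c + d) *\<^sub>C x = c *\<^sub>C x + d *\<^sub>C x"
    and scaleC_scaleC: "c *\<^sub>C (d *\<^sub>C x) = (c * d) *\<^sub>C x"
    and scaleC_one: "1 *\<^sub>C x = x"
    and scaleC_of_real: "complex_of_real r *\<^sub>C x = r *\<^sub>R x"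
    and cinner_add_left: "cinner (x + y) z = cinner x z + cinner y z"
    and cinner_scaleC_left: "cinner (c *\<^sub>C x) y = c * cinner x y"
    and cinner_commute: "cinner y x = cnj (cinner x y)"
    and cinner_self_norm: "cinner x x = complex_of_real ((norm x)\<^sup>2)"

definition bounded_clinear_op :: "('a::chilbert_space \<Rightarrow> 'a) \<Rightarrow> bool" where
  "bounded_clinear_op S \<longleftrightarrow> bounded_linear S \<and> (\<forall>c x. S (c *\<^sub>C x) = c *\<^sub>C S x)"

definition positive_op :: "('a::chilbert_space \<Rightarrow> 'a) \<Rightarrow> bool" where
  "positive_op A \<longleftrightarrow> bounded_clinear_op A \<and>
     (\<forall>x. Im (cinner (A x) x) = 0 \<and> 0 \<le> Re (cinner (A x) x))"

definition is_adjoint :: "('a::chilbert_space \<Rightarrow> 'a) \<Rightarrow> ('a \<Rightarrow> 'a) \<Rightarrow> bool" where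
  "is_adjoint S S' \<longleftrightarrow> (\<forall>x y. cinner (S x) y = cinner x (S' y))"

definition BA :: "('a::chilbert_space \<Rightarrow> 'a) \<Rightarrow> ('a \<Rightarrow> 'a) set" where
  "BA A = {S. bounded_clinear_op S \<and>
              (\<exists>S'. bounded_clinear_op S' \<and> is_adjoint S S' \<and> range (S' \<circ> A) \<subseteq> range A)}"

definition dw_radius :: "('b \<Rightarrow> 'b \<Rightarrow> complex) \<Rightarrow> ('b \<Rightarrow> 'b) \<Rightarrow> real" where
  "dw_radius ip S = Sup {sqrt ((cmod (ip (S z) z))\<^sup>2 + (sqrt (Re (ip (S z) (S z)))) ^ 4) | z.
                          sqrt (Re (ip z z)) = 1}"

definition cinnerA :: "('a::chilbert_space \<Rightarrow> 'a) \<Rightarrow> 'a \<Rightarrow> 'a \<Rightarrow> complex" where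
  "cinnerA A x z = cinner (A x) z"

definition dwA :: "('a::chilbert_space \<Rightarrow> 'a) \<Rightarrow> ('a \<Rightarrow> 'a) \<Rightarrow> real" where
  "dwA A S = dw_radius (cinnerA A) S"

text \<open>Operator matrices on H \<oplus> H (modelled as 'a \<times> 'a).\<close>
definition opmat :: "('a::chilbert_space \<Rightarrow> 'a) \<Rightarrow> ('a \<Rightarrow> 'a) \<Rightarrow> ('a \<Rightarrow> 'a) \<Rightarrow> ('a \<Rightarrow> 'a)
                     \<Rightarrow> 'a \<times> 'a \<Rightarrow> 'a \<times> 'a" where
  "opmat P Q R U = (\<lambda>(x1, x2). (P x1 + Q x2, R x1 + U x2))"

definition cinner_sum :: "'a::chilbert_space \<times> 'a \<Rightarrow> 'a \<times> 'a \<Rightarrow> complex" where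
  "cinner_sum x z = cinner (fst x) (fst z) + cinner (snd x) (snd z)"

definition A0 :: "('a::chilbert_space \<Rightarrow> 'a) \<Rightarrow> 'a \<times> 'a \<Rightarrow> 'a \<times> 'a" where
  "A0 A = opmat A (\<lambda>_. 0) (\<lambda>_. 0) A"

definition dwA0 :: "('a::chilbert_space \<Rightarrow> 'a) \<Rightarrow> ('a \<times> 'a \<Rightarrow> 'a \<times> 'a) \<Rightarrow> real" where
  "dwA0 A T = dw_radius (\<lambda>x z. cinner_sum (A0 A x) z) T"

end

theory Submission
  imports Defs
begin

(* Both identities are statements about Davis-Wielandt shells, the sets of points
   (<Sz,z>_A, ||Sz||_A^2) over A-unit vectors z, whose Sup of norms is the radius.
   The rotation W(x1,x2) = ((x1 + x2)/sqrt 2, (x2 - x1)/sqrt 2) is an A_0-isometry of H + H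
   onto itself conjugating [[S,T],[T,S]] to diag(S - T, S + T), so the two shells coincide.
   Taking (0, S) for (S, T) reduces the second identity to diag(-S, S), whose shell point at
   (x1,x2) is the shell point of x2 plus that of x1 with its first coordinate negated.
   A shell point of S scales with ||x||_A^2 and vanishes when ||x||_A = 0 (this uses
   S in B_A(H): ||Sx||_A^2 = <x, S^*ASx> and S^*ASx lies in the range of A), so every point
   of the shell of diag(-S, S) has norm at most a convex combination of norms of shell
   points of S; conversely x1 = 0 reproduces every shell point of S. *)

lemma Sup_real_eqI_upper_bounds:
  fixes X Y :: "real set"
  assumes "\<And>r. (\<forall>x\<in>X. x \<le> r) \<longleftrightarrow> (\<forall>y\<in>Y. y \<le> r)"
  shows "Sup X = Sup Y"
  unfolding Sup_real_def using assms by presburger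

lemma quadratic_nonneg_imp_linear_coeff_zero:
  fixes m n :: real
  assumes "\<And>t. 0 \<le> t\<^sup>2 * m - 2 * t * n"
  shows "n = 0"
proof -
  have "0 \<le> m" using assms[of 1] assms[of "-1"] by simp
  have "0 \<le> (n / (m + 1))\<^sup>2 * m - 2 * (n / (m + 1)) * n" by (rule assms)
  also have "\<dots> = - n\<^sup>2 * (m + 2) / (m + 1)\<^sup>2"
    using \<open>0 \<le> m\<close> by (simp add: divide_simps power2_eq_square) (simp add: algebra_simps)
  finally have "n\<^sup>2 * (m + 2) \<le> 0"
    using \<open>0 \<le> m\<close> by (simp add: divide_le_0_iff)
  then show "n = 0" using \<open>0 \<le> m\<close> by (simp add: mult_le_0_iff)
qed

lemma cinner_add_right: "cinner (x::'a::chilbert_space) (y + z) = cinner x y + cinner x z"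
  by (metis cinner_commute cinner_add_left complex_cnj_add)

lemma cinner_scaleC_right: "cinner (x::'a::chilbert_space) (c *\<^sub>C y) = cnj c * cinner x y"
  by (metis cinner_commute cinner_scaleC_left complex_cnj_mult)

lemma cinner_scaleR_left: "cinner (r *\<^sub>R (x::'a::chilbert_space)) y = of_real r * cinner x y"
  by (metis scaleC_of_real cinner_scaleC_left)

lemma cinner_scaleR_right: "cinner (x::'a::chilbert_space) (r *\<^sub>R y) = of_real r * cinner x y"
  by (metis scaleC_of_real cinner_scaleC_right complex_cnj_complex_of_real)

lemma cinner_minus_left: "cinner (- (x::'a::chilbert_space)) y = - cinner x y"
  using cinner_scaleR_left[of "-1" x y] by simp

lemma cinner_minus_right: "cinner (x::'a::chilbert_space) (- y) = - cinner x y"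
  using cinner_scaleR_right[of x "-1" y] by simp

lemma cinner_diff_left: "cinner ((x::'a::chilbert_space) - y) z = cinner x z - cinner y z"
  by (metis cinner_add_left cinner_minus_left diff_conv_add_uminus)

lemma cinner_diff_right: "cinner (x::'a::chilbert_space) (y - z) = cinner x y - cinner x z"
  by (metis cinner_add_right cinner_minus_right diff_conv_add_uminus)

lemma cinner_zero_left: "cinner 0 (y::'a::chilbert_space) = 0"
  using cinner_scaleR_left[of 0 y y] by simp

lemma cinner_zero_right: "cinner (x::'a::chilbert_space) 0 = 0"
  using cinner_scaleR_right[of x 0 x] by simp

lemmas cinner_simps = cinner_add_left cinner_add_right cinner_scaleR_left cinner_scaleR_right
  cinner_minus_left cinner_minus_right cinner_diff_left cinner_diff_right
  cinner_zero_left cinner_zero_right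

lemma bounded_clinear_op_linear: "bounded_clinear_op S \<Longrightarrow> linear S"
  unfolding bounded_clinear_op_def by (simp add: bounded_linear.linear)

lemma bounded_clinear_op_scaleC: "bounded_clinear_op S \<Longrightarrow> S (c *\<^sub>C x) = c *\<^sub>C S x"
  unfolding bounded_clinear_op_def by simp

lemma positive_op_self_adjoint:
  assumes "positive_op A"
  shows "cinner (A x) y = cinner x (A y)"
proof -
  have A: "bounded_clinear_op A" and real: "\<And>w. Im (cinner (A w) w) = 0"
    using assms unfolding positive_op_def by auto
  note lin = linear_add[OF bounded_clinear_op_linear[OF A]] bounded_clinear_op_scaleC[OF A]
  define p where "p = cinner (A x) y"
  define r where "r = cinner (A y) x"
  have "cinner (A (x + y)) (x + y) = cinner (A x) x + cinner (A y) y + p + r"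
    unfolding p_def r_def by (simp add: lin cinner_simps)
  then have "Im p + Im r = 0" using real[of "x + y"] real[of x] real[of y] by simp
  moreover have "cinner (A (x + \<i> *\<^sub>C y)) (x + \<i> *\<^sub>C y) = cinner (A x) x + cinner (A y) y - \<i> * p + \<i> * r"
    unfolding p_def r_def
    by (simp add: lin cinner_simps cinner_scaleC_left cinner_scaleC_right algebra_simps)
  then have "Re r - Re p = 0" using real[of "x + \<i> *\<^sub>C y"] real[of x] real[of y] by simp
  ultimately have "p = cnj r" by (simp add: complex_eq_iff)
  then show ?thesis unfolding p_def r_def by (metis cinner_commute)
qed

lemma positive_op_kernel:
  assumes "positive_op A" and "Re (cinner (A x) x) = 0"
  shows "A x = 0"
proof -
  have A: "linear A" and nonneg: "\<And>w. 0 \<le> Re (cinner (A w) w)"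
    using assms(1) bounded_clinear_op_linear unfolding positive_op_def by auto
  define n where "n = (norm (A x))\<^sup>2"
  define m where "m = Re (cinner (A (A x)) (A x))"
  have "cinner (A (A x)) x = cinner (A x) (A x)"
    using positive_op_self_adjoint[OF assms(1)] by simp
  then have "Re (cinner (A (x - t *\<^sub>R A x)) (x - t *\<^sub>R A x)) = t\<^sup>2 * m - 2 * t * n" for t
    using assms(2) unfolding m_def n_def
    by (simp add: linear_diff[OF A] linear_scale[OF A] cinner_simps cinner_self_norm
        power2_eq_square algebra_simps)
  then have "0 \<le> t\<^sup>2 * m - 2 * t * n" for t
    by (metis nonneg)
  then have "n = 0" by (rule quadratic_nonneg_imp_linear_coeff_zero)
  then show ?thesis unfolding n_def by simp
qed

lemma BA_preserves_A_null:
  assumes "positive_op A" and "S \<in> BA A" and "Re (cinner (A x) x) = 0"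
  shows "cinner (A (S x)) (S x) = 0"
proof -
  obtain S' where adj: "is_adjoint S S'" and range: "range (S' \<circ> A) \<subseteq> range A"
    using assms(2) unfolding BA_def by auto
  obtain w where w: "S' (A (S x)) = A w" using range by auto
  have "cinner (A (S x)) (S x) = cnj (cinner x (S' (A (S x))))"
    using adj unfolding is_adjoint_def by (metis cinner_commute)
  also have "\<dots> = cnj (cinner (A x) w)"
    unfolding w using positive_op_self_adjoint[OF assms(1)] by simp
  finally show ?thesis
    using positive_op_kernel[OF assms(1,3)] by (simp add: cinner_zero_left)
qed

definition dw_point :: "('b \<Rightarrow> 'b \<Rightarrow> complex) \<Rightarrow> ('b \<Rightarrow> 'b) \<Rightarrow> 'b \<Rightarrow> complex \<times> real" where
  "dw_point ip S z = (ip (S z) z, Re (ip (S z) (S z)))"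

definition dw_shell :: "('b \<Rightarrow> 'b \<Rightarrow> complex) \<Rightarrow> ('b \<Rightarrow> 'b) \<Rightarrow> (complex \<times> real) set" where
  "dw_shell ip S = dw_point ip S ` {z. Re (ip z z) = 1}"

lemma dw_radius_eq_Sup_shell:
  "dw_radius ip S = Sup ((\<lambda>(a, b). sqrt ((cmod a)\<^sup>2 + (sqrt b) ^ 4)) ` dw_shell ip S)"
  unfolding dw_radius_def dw_shell_def dw_point_def image_image by (simp add: setcompr_eq_image)

lemma dw_radius_eq_Sup_norm_shell:
  assumes "\<And>z. 0 \<le> Re (ip z z)"
  shows "dw_radius ip S = Sup (norm ` dw_shell ip S)"
proof -
  have "(sqrt b) ^ 4 = b\<^sup>2" if "0 \<le> b" for b :: real
    using that by (metis real_sqrt_pow2 power_mult numeral_Bit0 mult_2 power_even_eq)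
  then have "sqrt ((cmod a)\<^sup>2 + (sqrt b) ^ 4) = norm (a, b)" if "(a, b) \<in> dw_shell ip S" for a b
    using that assms unfolding dw_shell_def dw_point_def by (auto simp: norm_Pair)
  then show ?thesis
    unfolding dw_radius_eq_Sup_shell by (intro arg_cong[where f=Sup] image_cong) auto
qed

lemma dw_shell_unitary_similar:
  assumes "\<And>u v. ip (W u) (W v) = ip u v" and "\<And>z. M (W z) = W (D z)" and "surj W"
  shows "dw_shell ip M = dw_shell ip D"
proof -
  let ?U = "{z. Re (ip z z) = 1}"
  have unit: "?U = W ` ?U"
  proof (intro equalityI subsetI)
    fix z assume "z \<in> ?U"
    moreover obtain y where "z = W y" using assms(3) by (metis surjD)
    ultimately show "z \<in> W ` ?U" using assms(1) by auto
  qed (use assms(1) in auto)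
  have "dw_shell ip M = dw_point ip M ` W ` ?U"
    unfolding dw_shell_def by (rule arg_cong[OF unit])
  also have "\<dots> = (\<lambda>z. dw_point ip M (W z)) ` ?U"
    by (rule image_image)
  also have "\<dots> = dw_shell ip D"
    unfolding dw_shell_def dw_point_def assms(1,2) ..
  finally show ?thesis .
qed

lemma cinner_sum_A0:
  "cinner_sum (A0 A x) z = cinnerA A (fst x) (fst z) + cinnerA A (snd x) (snd z)"
  by (cases x) (simp add: cinner_sum_def A0_def opmat_def cinnerA_def)

lemma dwA0_opmat_symmetric_eq_diag:
  fixes A S T :: "'a::chilbert_space \<Rightarrow> 'a"
  assumes "linear A" and "linear S" and "linear T"
  shows "dwA0 A (opmat S T T S) = dwA0 A (opmat (\<lambda>x. S x - T x) (\<lambda>_. 0) (\<lambda>_. 0) (\<lambda>x. S x + T x))"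
proof -
  define c :: real where "c = 1 / sqrt 2"
  have c2: "c * c = 1 / 2" unfolding c_def by simp
  define W where "W = (\<lambda>(x1::'a, x2::'a). (c *\<^sub>R (x1 + x2), c *\<^sub>R (x2 - x1)))"
  note lin = linear_add[OF assms(1)] linear_diff[OF assms(1)] linear_scale[OF assms(1)]
    linear_add[OF assms(2)] linear_diff[OF assms(2)] linear_scale[OF assms(2)]
    linear_add[OF assms(3)] linear_diff[OF assms(3)] linear_scale[OF assms(3)]
  have "cinner_sum (A0 A (W u)) (W v) = cinner_sum (A0 A u) v" for u v
  proof -
    have "cinner_sum (A0 A (W u)) (W v) = of_real (c * c) *
      (cinnerA A (fst u + snd u) (fst v + snd v) + cinnerA A (snd u - fst u) (snd v - fst v))"
      unfolding cinner_sum_A0 W_def cinnerA_def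
      by (simp add: case_prod_beta lin cinner_scaleR_left cinner_scaleR_right distrib_left)
    then show ?thesis
      unfolding c2 cinner_sum_A0 cinnerA_def by (simp add: lin cinner_simps algebra_simps)
  qed
  moreover have "opmat S T T S (W z) = W (opmat (\<lambda>x. S x - T x) (\<lambda>_. 0) (\<lambda>_. 0) (\<lambda>x. S x + T x) z)" for z
    unfolding W_def opmat_def by (simp add: case_prod_beta lin algebra_simps)
  moreover have "surj W"
  proof (rule surjI)
    fix y :: "'a \<times> 'a"
    have "W (c *\<^sub>R (fst y - snd y), c *\<^sub>R (fst y + snd y)) = ((c * c) *\<^sub>R (2 *\<^sub>R fst y), (c * c) *\<^sub>R (2 *\<^sub>R snd y))"
      unfolding W_def by (simp add: algebra_simps scaleR_2)
    then show "W (c *\<^sub>R (fst y - snd y), c *\<^sub>R (fst y + snd y)) = y" unfolding c2 by simp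
  qed
  ultimately show ?thesis
    unfolding dwA0_def dw_radius_eq_Sup_shell
    by (subst dw_shell_unitary_similar[where W = W]) simp_all
qed

lemma dw_point_cinnerA_scaleR:
  assumes "linear A" and "linear S"
  shows "dw_point (cinnerA A) S (t *\<^sub>R x) = t\<^sup>2 *\<^sub>R dw_point (cinnerA A) S x"
  unfolding dw_point_def cinnerA_def
  by (simp add: linear_scale[OF assms(1)] linear_scale[OF assms(2)] cinner_simps power2_eq_square
      scaleR_conv_of_real)

lemma dw_point_cinnerA_null:
  assumes "positive_op A" and "S \<in> BA A" and "Re (cinnerA A x x) = 0"
  shows "dw_point (cinnerA A) S x = 0"
proof -
  have "A x = 0"
    using positive_op_kernel[OF assms(1)] assms(3) unfolding cinnerA_def .
  then have "cinner (A (S x)) x = 0"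
    using positive_op_self_adjoint[OF assms(1)] by (simp add: cinner_zero_right)
  then show ?thesis
    using BA_preserves_A_null[OF assms(1,2)] assms(3)
    unfolding dw_point_def cinnerA_def by (simp add: zero_prod_def)
qed

lemma norm_dw_point_cinnerA_le:
  assumes "positive_op A" and "S \<in> BA A" and bound: "\<forall>p \<in> dw_shell (cinnerA A) S. norm p \<le> r"
  shows "norm (dw_point (cinnerA A) S x) \<le> Re (cinnerA A x x) * r"
proof (cases "Re (cinnerA A x x) = 0")
  case True
  then show ?thesis using dw_point_cinnerA_null[OF assms(1,2)] by simp
next
  case False
  have A: "linear A" and S: "linear S"
    using assms(1,2) bounded_clinear_op_linear unfolding positive_op_def BA_def by auto
  define t where "t = sqrt (Re (cinnerA A x x))"
  have nonneg: "0 \<le> Re (cinnerA A x x)" using assms(1) unfolding positive_op_def cinnerA_def by simp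
  then have t: "0 < t" "t\<^sup>2 = Re (cinnerA A x x)" using False unfolding t_def by auto
  define u where "u = (1 / t) *\<^sub>R x"
  have x: "x = t *\<^sub>R u" unfolding u_def using t by simp
  have "Re (cinnerA A u u) = 1"
    using t unfolding x cinnerA_def by (simp add: linear_scale[OF A] cinner_simps power2_eq_square)
  then have "norm (dw_point (cinnerA A) S u) \<le> r"
    using bound unfolding dw_shell_def by blast
  moreover have "norm (dw_point (cinnerA A) S x) = t\<^sup>2 * norm (dw_point (cinnerA A) S u)"
    unfolding x dw_point_cinnerA_scaleR[OF A S] by simp
  ultimately show ?thesis
    unfolding t(2) using nonneg by (simp add: mult_left_mono)
qed

lemma Re_cinner_sum_A0_self:
  "Re (cinner_sum (A0 A (x1, x2)) (x1, x2)) = Re (cinnerA A x1 x1) + Re (cinnerA A x2 x2)"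
  unfolding cinner_sum_A0 by simp

lemma dw_point_A0_diag_neg:
  assumes "linear A" and "linear S"
  shows "dw_point (\<lambda>x z. cinner_sum (A0 A x) z) (opmat (\<lambda>x. - S x) (\<lambda>_. 0) (\<lambda>_. 0) S) (x1, x2)
    = (- fst (dw_point (cinnerA A) S x1), snd (dw_point (cinnerA A) S x1)) + dw_point (cinnerA A) S x2"
  unfolding dw_point_def cinner_sum_A0 cinnerA_def opmat_def
  by (simp add: linear_neg[OF assms(1)] linear_0[OF assms(1)] linear_0[OF assms(2)] cinner_simps)

lemma dw_shell_subset_A0_diag_neg:
  assumes "linear A" and "linear S"
  shows "dw_shell (cinnerA A) S
    \<subseteq> dw_shell (\<lambda>x z. cinner_sum (A0 A x) z) (opmat (\<lambda>x. - S x) (\<lambda>_. 0) (\<lambda>_. 0) S)"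
proof
  fix p assume "p \<in> dw_shell (cinnerA A) S"
  then obtain u where u: "Re (cinnerA A u u) = 1" "p = dw_point (cinnerA A) S u"
    unfolding dw_shell_def by blast
  have "dw_point (cinnerA A) S 0 = 0"
    unfolding dw_point_def cinnerA_def by (simp add: linear_0[OF assms(2)] cinner_simps zero_prod_def)
  then have "p = dw_point (\<lambda>x z. cinner_sum (A0 A x) z) (opmat (\<lambda>x. - S x) (\<lambda>_. 0) (\<lambda>_. 0) S) (0, u)"
    using u(2) by (simp add: dw_point_A0_diag_neg[OF assms] zero_prod_def)
  moreover have "Re (cinner_sum (A0 A (0, u)) (0, u)) = 1"
    using u(1) by (simp add: Re_cinner_sum_A0_self cinnerA_def cinner_simps)
  ultimately show "p \<in> dw_shell (\<lambda>x z. cinner_sum (A0 A x) z) (opmat (\<lambda>x. - S x) (\<lambda>_. 0) (\<lambda>_. 0) S)"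
    unfolding dw_shell_def by blast
qed

lemma dwA0_diag_neg_eq_dwA:
  fixes A S :: "'a::chilbert_space \<Rightarrow> 'a"
  assumes pos: "positive_op A" and BA: "S \<in> BA A"
  shows "dwA0 A (opmat (\<lambda>x. - S x) (\<lambda>_. 0) (\<lambda>_. 0) S) = dwA A S"
proof -
  define ip where "ip = (\<lambda>x z. cinner_sum (A0 A x) (z::'a \<times> 'a))"
  define D where "D = opmat (\<lambda>x. - S x) (\<lambda>_. 0) (\<lambda>_. 0) S"
  define pt where "pt = dw_point (cinnerA A) S"
  have A: "linear A" and S: "linear S"
    using pos BA bounded_clinear_op_linear unfolding positive_op_def BA_def by auto
  have nonneg: "0 \<le> Re (cinnerA A x x)" for x
    using pos unfolding positive_op_def cinnerA_def by simp
  have "\<forall>p \<in> dw_shell ip D. norm p \<le> r" if bound: "\<forall>p \<in> dw_shell (cinnerA A) S. norm p \<le> r" for r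
  proof
    fix p assume "p \<in> dw_shell ip D"
    then obtain x1 x2 where unit: "Re (cinnerA A x1 x1) + Re (cinnerA A x2 x2) = 1"
      and p: "p = (- fst (pt x1), snd (pt x1)) + pt x2"
      unfolding dw_shell_def ip_def D_def pt_def
      by (auto simp: Re_cinner_sum_A0_self dw_point_A0_diag_neg[OF A S])
    have "norm p \<le> norm (- fst (pt x1), snd (pt x1)) + norm (pt x2)"
      unfolding p by (rule norm_triangle_ineq)
    also have "\<dots> = norm (pt x1) + norm (pt x2)"
      by (cases "pt x1") (simp add: norm_Pair)
    also have "\<dots> \<le> Re (cinnerA A x1 x1) * r + Re (cinnerA A x2 x2) * r"
      unfolding pt_def by (intro add_mono norm_dw_point_cinnerA_le[OF pos BA bound])
    finally show "norm p \<le> r" using unit by (simp add: distrib_right[symmetric])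
  qed
  then have "Sup (norm ` dw_shell ip D) = Sup (norm ` dw_shell (cinnerA A) S)"
    using dw_shell_subset_A0_diag_neg[OF A S] unfolding ip_def D_def
    by (intro Sup_real_eqI_upper_bounds) blast
  moreover have "0 \<le> Re (ip z z)" for z
    unfolding ip_def using nonneg by (cases z) (simp add: Re_cinner_sum_A0_self add_nonneg_nonneg)
  ultimately show ?thesis
    unfolding dwA0_def dwA_def ip_def D_def using nonneg
    by (simp add: dw_radius_eq_Sup_norm_shell)
qed

theorem lemma3p5:
  fixes A S T :: "'a::chilbert_space \<Rightarrow> 'a"
  assumes "positive_op A"
    and "S \<in> BA A" and "T \<in> BA A"
  shows "dwA0 A (opmat S T T S) = dwA0 A (opmat (\<lambda>x. S x - T x) (\<lambda>_. 0) (\<lambda>_. 0) (\<lambda>x. S x + T x))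
         \<and> dwA0 A (opmat (\<lambda>_. 0) S S (\<lambda>_. 0)) = dwA A S"
proof
  have A: "linear A" and S: "linear S" and T: "linear T"
    using assms bounded_clinear_op_linear unfolding positive_op_def BA_def by auto
  show "dwA0 A (opmat S T T S) = dwA0 A (opmat (\<lambda>x. S x - T x) (\<lambda>_. 0) (\<lambda>_. 0) (\<lambda>x. S x + T x))"
    using dwA0_opmat_symmetric_eq_diag[OF A S T] .
  have "dwA0 A (opmat (\<lambda>_. 0) S S (\<lambda>_. 0)) = dwA0 A (opmat (\<lambda>x. - S x) (\<lambda>_. 0) (\<lambda>_. 0) S)"
    using dwA0_opmat_symmetric_eq_diag[OF A linear_zero S] by simp
  also have "\<dots> = dwA A S"
    using dwA0_diag_neg_eq_dwA[OF assms(1,2)] .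
  finally show "dwA0 A (opmat (\<lambda>_. 0) S S (\<lambda>_. 0)) = dwA A S" .
qed

end
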